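(* Let $n,i,j$ be positive integers with $i+2\le j\le n-1$, and let $\lambda=i\,n\,(j-1)\,j$ and $\mu=(j-1)\,j\,n\,i$ (words of length $4$). For $\pi\in X_n(\lambda)$ with $\lambda$-decomposition $(\alpha,\lambda,\gamma,\delta)$, the permutation $\gamma'\mu\alpha'\delta$ lies in $X_n(\mu)$ and its $\mu$-decomposition is $(\gamma',\mu,\alpha',\delta)$. The map $X_n(\lambda)\to X_n(\mu)$ given by $(\alpha,\lambda,\gamma,\delta)\mapsto(\gamma',\mu,\alpha',\delta)$ (i.e. $\pi\mapsto\gamma'\mu\alpha'\delta$) is a bijection, whose inverse is the map sending $\sigma\in X_n(\mu)$ with $\mu$-decomposition $(\alpha,\mu,\gamma,\delta)$ to $(\gamma',\lambda,\alpha',\delta)$, i.e. to $\gamma'\lambda\alpha'\delta$.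
   Context: For a word $w=w_1\cdots w_k$ of pairwise distinct positive integers, an ascent is an index $t$ with $w_t<w_{t+1}$, a descent one with $w_t>w_{t+1}$, and the height is $h(w)=(\#\text{ascents})-(\#\text{descents})$ ($h(w)=0$ if $k\le1$). The word is ballot if every prefix has nonnegative height. $\mathcal{B}$ denotes the set of all finite ballot words of pairwise distinct positive integers (including the empty word). A ballot permutation of $[n]$ is a permutation $\pi_1\cdots\pi_n$ in one-line notation that is a ballot word. For a word $w$, $w_{-1}$ is its last letter and $w'=w_k\cdots w_1$ its reversal. Juxtaposition denotes concatenation. For a nonempty $\omega\in\mathcal{B}$, $X_n(\omega)$ is the set of ballot permutations $\pi$ of $[n]$ that can be written as $\pi=\alpha\omega\gamma\delta$ (with $\alpha,\gamma,\delta$ possibly empty) such that $h(\alpha\omega\gamma)=h(\omega)$. For $\pi\in X_n(\omega)$, its $\omega$-decomposition is the (unique) 4-tuple $(\alpha,\omega,\gamma,\delta)$ with $\pi=\alpha\omega\gamma\delta$, $h(\alpha\omega\gamma)=h(\omega)$ and $\gamma'\omega_{-1}\in\mathcal{B}$, where $\gamma$ is of maximal length among all words with these properties. *)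

theory Defs
  imports Main
begin

text \<open>Words are lists of natural numbers; positions are 0-based.\<close>

definition ascents :: "nat list \<Rightarrow> nat" where
  "ascents w = card {t. Suc t < length w \<and> w ! t < w ! Suc t}"

definition descents :: "nat list \<Rightarrow> nat" where
  "descents w = card {t. Suc t < length w \<and> w ! t > w ! Suc t}"

definition height :: "nat list \<Rightarrow> int" where
  "height w = int (ascents w) - int (descents w)"

definition ballot :: "nat list \<Rightarrow> bool" where
  "ballot w \<longleftrightarrow> distinct w \<and> (\<forall>x\<in>set w. 0 < x) \<and>
     (\<forall>k\<le>length w. 0 \<le> height (take k w))"

definition ballot_perm :: "nat \<Rightarrow> nat list \<Rightarrow> bool" where
  "ballot_perm n p \<longleftrightarrow> length p = n \<and> distinct p \<and> set p = {1..n} \<and> ballot p"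

definition X :: "nat \<Rightarrow> nat list \<Rightarrow> nat list set" where
  "X n \<omega> = {p. ballot_perm n p \<and>
     (\<exists>\<alpha> \<gamma> \<delta>. p = \<alpha> @ \<omega> @ \<gamma> @ \<delta> \<and> height (\<alpha> @ \<omega> @ \<gamma>) = height \<omega>)}"

definition decomp_cand :: "nat list \<Rightarrow> nat list \<Rightarrow> nat list \<times> nat list \<times> nat list \<Rightarrow> bool" where
  "decomp_cand \<omega> p t \<longleftrightarrow> (case t of (\<alpha>, \<gamma>, \<delta>) \<Rightarrow>
     p = \<alpha> @ \<omega> @ \<gamma> @ \<delta> \<and> height (\<alpha> @ \<omega> @ \<gamma>) = height \<omega> \<and>
     ballot (rev \<gamma> @ [last \<omega>]))"

definition is_decomp :: "nat list \<Rightarrow> nat list \<Rightarrow> nat list \<times> nat list \<times> nat list \<Rightarrow> bool" where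
  "is_decomp \<omega> p t \<longleftrightarrow> decomp_cand \<omega> p t \<and>
     (\<forall>t'. decomp_cand \<omega> p t' \<longrightarrow> length (fst (snd t')) \<le> length (fst (snd t)))"

text \<open>The (unique) omega-decomposition (alpha, gamma, delta) of p; the word omega itself is implicit.\<close>
definition decomp :: "nat list \<Rightarrow> nat list \<Rightarrow> nat list \<times> nat list \<times> nat list" where
  "decomp \<omega> p = (THE t. is_decomp \<omega> p t)"

definition swap_map :: "nat list \<Rightarrow> nat list \<Rightarrow> nat list \<Rightarrow> nat list" where
  "swap_map \<omega>1 \<omega>2 p = (case decomp \<omega>1 p of (\<alpha>, \<gamma>, \<delta>) \<Rightarrow> rev \<gamma> @ \<omega>2 @ rev \<alpha> @ \<delta>)"

end

theory Submission
  imports Defs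
begin

text \<open>
  Let \<open>\<pi> = \<alpha> \<lambda> \<gamma> \<delta>\<close> be the \<open>\<lambda>\<close>-decomposition. Every letter outside \<open>\<lambda>\<close> compares with the
  first (last) letter of \<open>\<mu>\<close> as with the last (first) letter of \<open>\<lambda>\<close>, and both words have
  height 1. Hence in \<open>\<gamma>' \<mu> \<alpha>'\<close> the contributions of \<open>\<gamma>\<close> and \<open>\<alpha>\<close> merely change sign, so this
  prefix again has height 1, and the ballot conditions on \<open>\<gamma>'\<close> and on \<open>\<alpha>\<close> exchange their roles.
  Along \<open>\<delta>\<close> the height paths after \<open>\<alpha> \<lambda> \<gamma>\<close> and after \<open>\<gamma>' \<mu> \<alpha>'\<close> differ only in the first
  step. The first path neither returns to level 1 (maximality of \<open>\<gamma>\<close>) nor drops below 0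
  (\<open>\<pi>\<close> is ballot), so every nonempty prefix of \<open>\<delta>\<close> has nonnegative height; this makes
  \<open>\<gamma>' \<mu> \<alpha>' \<delta>\<close> ballot and \<open>\<alpha>'\<close> maximal. Exchanging \<open>\<lambda>\<close> and \<open>\<mu>\<close> gives the inverse map.
\<close>

definition rise :: "nat \<Rightarrow> nat \<Rightarrow> int" where
  "rise a b = (if a < b then 1 else if b < a then -1 else 0)"

lemma card_adjacent_Cons_Cons:
  "card {t. Suc t < length (a # b # r) \<and> R ((a # b # r) ! t) ((a # b # r) ! Suc t)} =
   (if R a b then 1 else 0) + card {t. Suc t < length (b # r) \<and> R ((b # r) ! t) ((b # r) ! Suc t)}"
proof -
  let ?T = "{t. Suc t < length (b # r) \<and> R ((b # r) ! t) ((b # r) ! Suc t)}"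
  have "{t. Suc t < length (a # b # r) \<and> R ((a # b # r) ! t) ((a # b # r) ! Suc t)} =
        (if R a b then {0} else {}) \<union> Suc ` ?T"
  proof (intro set_eqI iffI)
    fix t assume "t \<in> {t. Suc t < length (a # b # r) \<and> R ((a # b # r) ! t) ((a # b # r) ! Suc t)}"
    then show "t \<in> (if R a b then {0} else {}) \<union> Suc ` ?T"
      by (cases t) auto
  qed (auto split: if_splits)
  moreover have "card (Suc ` ?T) = card ?T" by (simp add: card_image)
  ultimately show ?thesis by (simp add: card_insert_if image_iff)
qed

lemma height_Nil [simp]: "height [] = 0"
  by (simp add: height_def ascents_def descents_def)

lemma height_singleton [simp]: "height [a] = 0"
  by (simp add: height_def ascents_def descents_def)

lemma height_Cons_Cons [simp]: "height (a # b # r) = rise a b + height (b # r)"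
proof -
  have "ascents (a # b # r) = (if a < b then 1 else 0) + ascents (b # r)"
    unfolding ascents_def by (rule card_adjacent_Cons_Cons)
  moreover have "descents (a # b # r) = (if b < a then 1 else 0) + descents (b # r)"
    unfolding descents_def by (rule card_adjacent_Cons_Cons[where R = "\<lambda>x y. y < x"])
  ultimately show ?thesis by (simp add: height_def rise_def)
qed

lemma height_Cons: "w \<noteq> [] \<Longrightarrow> height (x # w) = rise x (hd w) + height w"
  by (cases w) auto

lemma height_append_last: "u \<noteq> [] \<Longrightarrow> height (u @ v) = height u + height (last u # v)"
  by (induction u rule: induct_list012) auto

lemma height_append:
  "u \<noteq> [] \<Longrightarrow> v \<noteq> [] \<Longrightarrow> height (u @ v) = height u + rise (last u) (hd v) + height v"
  by (simp add: height_append_last height_Cons)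

lemma height_append_hd: "w \<noteq> [] \<Longrightarrow> height (u @ w) = height (u @ [hd w]) + height w"
  by (cases "u = []") (auto simp: height_append)

lemma height_append_middle:
  "w \<noteq> [] \<Longrightarrow> height (a @ w @ b) = height (a @ [hd w]) + height w + height (last w # b)"
  using height_append_hd[of "w @ b" a] height_append_last[of w b] by simp

lemma height_rev: "height (rev w) = - height w"
proof (induction w)
  case (Cons x w)
  then show ?case
    by (cases "w = []") (auto simp: height_append height_Cons last_rev rise_def)
qed simp

lemma height_snoc_ge: "height u - 1 \<le> height (u @ [y])"
  by (cases "u = []") (auto simp: height_append rise_def)

lemma height_append_take_Suc_ge:
  "Suc m \<le> length d \<Longrightarrow> height (u @ take m d) - 1 \<le> height (u @ take (Suc m) d)"
  using height_snoc_ge[of "u @ take m d" "d ! m"] by (simp add: take_Suc_conv_app_nth)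

lemma height_append_take:
  assumes "u \<noteq> []" "1 \<le> m" "m \<le> length d"
  shows "height (u @ take m d) = height u + rise (last u) (hd d) + height (take m d)"
proof -
  have "take m d \<noteq> []" "hd (take m d) = hd d" using assms by auto
  then show ?thesis using assms(1) height_append[of u "take m d"] by simp
qed

lemma height_take_Suc_0 [simp]: "height (take (Suc 0) d) = 0"
  by (cases d) auto

lemma int_path_reaches_level:
  fixes f :: "nat \<Rightarrow> int"
  assumes "\<And>k. k < n \<Longrightarrow> f k - 1 \<le> f (Suc k)" "c \<le> f 0" "f n \<le> c"
  shows "\<exists>k\<le>n. f k = c \<and> (\<forall>k'\<le>k. c \<le> f k')"
  using assms
proof (induction n arbitrary: f)
  case (Suc n)
  show ?case
  proof (cases "f 0 = c")
    case False
    have "\<exists>k\<le>n. f (Suc k) = c \<and> (\<forall>k'\<le>k. c \<le> f (Suc k'))"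
      using Suc.prems False by (intro Suc.IH) force+
    then obtain k where "k \<le> n" "f (Suc k) = c" "\<forall>k'\<le>k. c \<le> f (Suc k')" by blast
    moreover have "c \<le> f k'" if "k' \<le> Suc k" for k'
      using that Suc.prems(2) \<open>\<forall>k'\<le>k. c \<le> f (Suc k')\<close> by (cases k') auto
    ultimately show ?thesis by (intro exI[of _ "Suc k"]) auto
  qed auto
qed auto

lemma all_take_append_iff:
  "(\<forall>k\<le>length (u @ v). P (take k (u @ v))) \<longleftrightarrow>
   (\<forall>k\<le>length u. P (take k u)) \<and> (\<forall>k\<le>length v. P (u @ take k v))"
proof (intro iffI conjI allI impI)
  fix k
  assume H: "\<forall>k\<le>length (u @ v). P (take k (u @ v))"
  show "P (take k u)" if "k \<le> length u"
    using H[rule_format, of k] that by simp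
  show "P (u @ take k v)" if "k \<le> length v"
    using H[rule_format, of "length u + k"] that by simp
next
  fix k
  assume "(\<forall>k\<le>length u. P (take k u)) \<and> (\<forall>k\<le>length v. P (u @ take k v))" "k \<le> length (u @ v)"
  then show "P (take k (u @ v))" by (cases "k \<le> length u") auto
qed

definition nonneg_heights :: "nat list \<Rightarrow> bool" where
  "nonneg_heights w \<longleftrightarrow> (\<forall>k\<le>length w. 0 \<le> height (take k w))"

lemma ballot_iff_nonneg_heights:
  "ballot w \<longleftrightarrow> distinct w \<and> (\<forall>x\<in>set w. 0 < x) \<and> nonneg_heights w"
  by (simp add: ballot_def nonneg_heights_def)

lemma nonneg_heights_append_iff:
  "nonneg_heights (u @ v) \<longleftrightarrow> nonneg_heights u \<and> (\<forall>k\<le>length v. 0 \<le> height (u @ take k v))"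
  unfolding nonneg_heights_def by (rule all_take_append_iff)

lemma nonneg_heights_prefix: "nonneg_heights (u @ v) \<Longrightarrow> 0 \<le> height u"
  unfolding nonneg_heights_append_iff by auto

lemma nonneg_heights_snoc_iff:
  "nonneg_heights (u @ [x]) \<longleftrightarrow> nonneg_heights u \<and> 0 \<le> height (u @ [x])"
  unfolding nonneg_heights_append_iff by (auto simp: le_Suc_eq nonneg_heights_def)

lemma nonneg_heights_rev_iff:
  "nonneg_heights (rev w) \<longleftrightarrow> (\<forall>m\<le>length w. height (drop m w) \<le> 0)"
proof -
  have "take k (rev w) = rev (drop (length w - k) w)" for k
    by (simp add: take_rev)
  then have "nonneg_heights (rev w) \<longleftrightarrow> (\<forall>k\<le>length w. height (drop (length w - k) w) \<le> 0)"
    by (simp add: nonneg_heights_def height_rev)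
  also have "\<dots> \<longleftrightarrow> (\<forall>m\<le>length w. height (drop m w) \<le> 0)"
    by (metis diff_diff_cancel diff_le_self)
  finally show ?thesis .
qed

lemma height_drop_Cons:
  assumes "u \<noteq> []" "last u = x" "m \<le> length g"
  shows "height (drop m (x # g)) = height (u @ g) - height (u @ take m g)"
proof -
  have "last (u @ take m g) # drop m g = drop m (x # g)"
    using assms by (cases m) (auto simp: take_Suc_conv_app_nth Cons_nth_drop_Suc)
  moreover have "height (u @ g) = height (u @ take m g) + height (last (u @ take m g) # drop m g)"
    using height_append_last[of "u @ take m g" "drop m g"] assms(1) by simp
  ultimately show ?thesis by simp
qed

lemma ballot_rev_snoc_iff:
  assumes "u \<noteq> []" "last u = x"
  shows "ballot (rev g @ [x]) \<longleftrightarrow> distinct (x # g) \<and> (\<forall>y\<in>set (x # g). 0 < y) \<and>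
     (\<forall>m\<le>length g. height (u @ g) \<le> height (u @ take m g))"
proof -
  have "nonneg_heights (rev (x # g)) \<longleftrightarrow> (\<forall>m\<le>length g. height (drop m (x # g)) \<le> 0)"
    unfolding nonneg_heights_rev_iff by (auto simp: le_Suc_eq)
  also have "\<dots> \<longleftrightarrow> (\<forall>m\<le>length g. height (u @ g) \<le> height (u @ take m g))"
    using height_drop_Cons[OF assms] by simp
  finally show ?thesis
    unfolding ballot_iff_nonneg_heights by auto
qed

text \<open>
  The height path along \<open>d\<close>, started after \<open>u\<close>, comes back to its initial level without going
  below it. For \<open>u = \<alpha> \<omega> \<gamma>\<close> this is exactly what would allow \<open>\<gamma>\<close> to be prolonged into \<open>\<delta>\<close>
  (lemma \<open>is_decomp_iff_not_returns\<close>).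
\<close>

definition returns :: "nat list \<Rightarrow> nat list \<Rightarrow> bool" where
  "returns u d \<longleftrightarrow> (\<exists>m. 1 \<le> m \<and> m \<le> length d \<and> height (u @ take m d) = height u \<and>
     (\<forall>m'\<le>m. height u \<le> height (u @ take m' d)))"

lemma not_returns_if_descends:
  assumes "u \<noteq> []" "d \<noteq> []" "hd d < last u"
  shows "\<not> returns u d"
proof
  assume "returns u d"
  then have "height u \<le> height (u @ take 1 d)"
    unfolding returns_def by blast
  moreover have "height (u @ take 1 d) = height u - 1"
    using height_append_take[OF assms(1), of 1 d] assms(2,3) by (simp add: rise_def Suc_le_eq)
  ultimately show False by simp
qed

lemma above_if_ascends_and_not_returns:
  assumes "u \<noteq> []" "last u < hd d" "\<not> returns u d" "1 \<le> m" "m \<le> length d"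
  shows "height u < height (u @ take m d)"
proof (rule ccontr)
  assume below: "\<not> ?thesis"
  define f where "f k = height (u @ take (Suc k) d)" for k
  have "\<exists>k\<le>m - 1. f k = height u \<and> (\<forall>k'\<le>k. height u \<le> f k')"
  proof (rule int_path_reaches_level)
    show "f k - 1 \<le> f (Suc k)" if "k < m - 1" for k
      using that assms(5) unfolding f_def by (intro height_append_take_Suc_ge) simp
    show "height u \<le> f 0"
      using height_append_take[OF assms(1), of 1 d] assms by (simp add: f_def rise_def)
    show "f (m - 1) \<le> height u"
      using below assms(4) by (simp add: f_def)
  qed
  then obtain k where k: "k \<le> m - 1" "f k = height u" "\<forall>k'\<le>k. height u \<le> f k'"
    by blast
  have "height u \<le> height (u @ take m' d)" if "m' \<le> Suc k" for m'
    using that k(3) by (cases m') (auto simp: f_def)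
  then have "returns u d"
    unfolding returns_def using k(1,2) assms(4,5) f_def by (intro exI[of _ "Suc k"]) auto
  with assms(3) show False ..
qed

lemma height_take_nonneg_if_not_returns:
  assumes "u \<noteq> []" "height u \<le> 1" "last u \<notin> set d"
    and "\<forall>m\<le>length d. 0 \<le> height (u @ take m d)" "\<not> returns u d"
    and "1 \<le> m" "m \<le> length d"
  shows "0 \<le> height (take m d)"
proof (cases "last u < hd d")
  case True
  then show ?thesis
    using above_if_ascends_and_not_returns[OF assms(1) True assms(5-7)]
      height_append_take[OF assms(1) assms(6,7)] by (simp add: rise_def)
next
  case False
  have "d \<noteq> []" using assms(6,7) by auto
  then have "hd d \<noteq> last u" using assms(3) hd_in_set by metis
  with False have "rise (last u) (hd d) = -1" by (simp add: rise_def)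
  then show ?thesis
    using assms(2,4,6,7) height_append_take[OF assms(1) assms(6,7)] by force
qed

lemma nonneg_and_not_returns_if_tail_nonneg:
  assumes "v \<noteq> []" "1 \<le> height v" "last v \<notin> set d"
    and tail: "\<And>m. 1 \<le> m \<Longrightarrow> m \<le> length d \<Longrightarrow> 0 \<le> height (take m d)"
  shows "(\<forall>m\<le>length d. 0 \<le> height (v @ take m d)) \<and> \<not> returns v d"
proof (cases "d = []")
  case True
  then show ?thesis using assms(2) by (simp add: returns_def)
next
  case False
  have "hd d \<noteq> last v" using assms(3) False hd_in_set by metis
  have heights: "height (v @ take m d) = height v + rise (last v) (hd d) + height (take m d)"
    if "1 \<le> m" "m \<le> length d" for m
    using height_append_take[OF assms(1) that] .
  have "0 \<le> height (v @ take m d)" if "m \<le> length d" for m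
    using that assms(2) heights[of m] tail[of m] by (cases m) (auto simp: rise_def)
  moreover have "\<not> returns v d"
  proof (cases "hd d < last v")
    case True
    then show ?thesis using not_returns_if_descends assms(1) False by blast
  next
    case False
    with \<open>hd d \<noteq> last v\<close> have "rise (last v) (hd d) = 1" by (simp add: rise_def)
    then show ?thesis using heights tail unfolding returns_def by fastforce
  qed
  ultimately show ?thesis by blast
qed

lemma append_middle_unique:
  assumes "distinct (a @ w @ b)" "w \<noteq> []" "a @ w @ b = a' @ w @ b'"
  shows "a = a' \<and> b = b'"
proof -
  let ?p = "a @ w @ b"
  have "?p ! length a = hd w"
    using assms(2) by (simp add: nth_append hd_conv_nth)
  moreover have "?p ! length a' = hd w"
    unfolding assms(3) using assms(2) by (simp add: nth_append hd_conv_nth)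
  moreover have "length a < length ?p" "length a' < length ?p"
    using assms(2) by simp (simp only: assms(3), simp add: assms(2))
  ultimately have "length a = length a'"
    using nth_eq_iff_index_eq[OF assms(1)] by metis
  then show ?thesis using assms(3) by simp
qed

lemma decomp_cand_append_take_iff:
  assumes "distinct p" "\<forall>x\<in>set p. 0 < x" "\<omega> \<noteq> []" "decomp_cand \<omega> p (a, g, d)" "m \<le> length d"
  shows "decomp_cand \<omega> p (a, g @ take m d, drop m d) \<longleftrightarrow>
    height (a @ \<omega> @ g @ take m d) = height (a @ \<omega> @ g) \<and>
    (\<forall>m'\<le>m. height (a @ \<omega> @ g) \<le> height (a @ \<omega> @ g @ take m' d))"
proof -
  from assms(4) have p: "p = a @ \<omega> @ g @ d" and h: "height (a @ \<omega> @ g) = height \<omega>"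
    and bg: "ballot (rev g @ [last \<omega>])" by (simp_all add: decomp_cand_def)
  define u where "u = a @ \<omega>"
  have u: "u \<noteq> []" "last u = last \<omega>" using assms(3) by (simp_all add: u_def)
  have g_above: "\<forall>k\<le>length g. height (u @ g) \<le> height (u @ take k g)"
    using bg ballot_rev_snoc_iff[OF u] by blast
  have "set (take m d) \<subseteq> set d" "last \<omega> \<in> set \<omega>"
    using assms(3) by (simp_all add: set_take_subset)
  then have "distinct (last \<omega> # g @ take m d)" "\<forall>y\<in>set (last \<omega> # g @ take m d). 0 < y"
    using assms(1,2) distinct_take[of d m] unfolding p by auto
  then have "ballot (rev (g @ take m d) @ [last \<omega>]) \<longleftrightarrow>
      (\<forall>k\<le>length (g @ take m d). height (u @ g @ take m d) \<le> height (u @ take k (g @ take m d)))"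
    using ballot_rev_snoc_iff[OF u, of "g @ take m d"] by simp
  also have "\<dots> \<longleftrightarrow> (\<forall>k\<le>length g. height (u @ g @ take m d) \<le> height (u @ take k g)) \<and>
      (\<forall>m'\<le>m. height (u @ g @ take m d) \<le> height (u @ g @ take m' d))"
  proof -
    have "(\<forall>k\<le>length (take m d). P (g @ take k (take m d))) \<longleftrightarrow> (\<forall>k\<le>m. P (g @ take k d))" for P
      using assms(5) by (auto simp: min_absorb1 min_absorb2)
    from this[of "\<lambda>x. height (u @ g @ take m d) \<le> height (u @ x)"] show ?thesis
      by (simp only: all_take_append_iff[where P = "\<lambda>x. height (u @ g @ take m d) \<le> height (u @ x)"])
  qed
  finally show ?thesis
    using p h g_above by (auto simp: decomp_cand_def u_def)
qed

lemma is_decomp_iff_not_returns: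
  assumes "distinct p" "\<forall>x\<in>set p. 0 < x" "\<omega> \<noteq> []" and cand: "decomp_cand \<omega> p (a, g, d)"
  shows "is_decomp \<omega> p (a, g, d) \<longleftrightarrow> \<not> returns (a @ \<omega> @ g) d"
proof
  assume dec: "is_decomp \<omega> p (a, g, d)"
  show "\<not> returns (a @ \<omega> @ g) d"
  proof
    assume "returns (a @ \<omega> @ g) d"
    then obtain m where m: "1 \<le> m" "m \<le> length d"
      and "height (a @ \<omega> @ g @ take m d) = height (a @ \<omega> @ g)"
      and "\<forall>m'\<le>m. height (a @ \<omega> @ g) \<le> height (a @ \<omega> @ g @ take m' d)"
      unfolding returns_def by auto
    then have "decomp_cand \<omega> p (a, g @ take m d, drop m d)"
      using decomp_cand_append_take_iff[OF assms m(2)] by simp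
    then have "length (g @ take m d) \<le> length g"
      using dec unfolding is_decomp_def by fastforce
    with m show False by simp
  qed
next
  assume no_return: "\<not> returns (a @ \<omega> @ g) d"
  have "length g2 \<le> length g" if "decomp_cand \<omega> p (a2, g2, d2)" for a2 g2 d2
  proof (rule ccontr)
    assume longer: "\<not> length g2 \<le> length g"
    have "p = a2 @ \<omega> @ g2 @ d2" "p = a @ \<omega> @ g @ d"
      using that cand by (simp_all add: decomp_cand_def)
    then have "a2 = a" and gd: "g2 @ d2 = g @ d"
      using append_middle_unique[of a \<omega> "g @ d" a2 "g2 @ d2"] assms(1,3) by auto
    define m where "m = length g2 - length g"
    have "g2 = take (length g2) (g @ d)" "d2 = drop (length g2) (g @ d)"
      by (simp_all flip: gd)
    then have "g2 = g @ take m d" "d2 = drop m d" "1 \<le> m" "m \<le> length d"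
      using longer arg_cong[OF gd, of length] by (auto simp: m_def)
    then have "returns (a @ \<omega> @ g) d"
      using that \<open>a2 = a\<close> decomp_cand_append_take_iff[OF assms] unfolding returns_def by auto
    with no_return show False ..
  qed
  then show "is_decomp \<omega> p (a, g, d)"
    unfolding is_decomp_def using cand by auto
qed

lemma decomp_cand_exists:
  assumes "ballot p" "\<omega> \<noteq> []" and p: "p = \<alpha> @ \<omega> @ \<gamma> @ \<delta>"
    and returned: "height (\<alpha> @ \<omega> @ \<gamma>) = height \<omega>"
  shows "\<exists>g d. decomp_cand \<omega> p (\<alpha>, g, d)"
proof -
  have dp: "distinct p" "\<forall>x\<in>set p. 0 < x" "nonneg_heights p"
    using assms(1) by (simp_all add: ballot_iff_nonneg_heights)
  \<comment> \<open>cut \<open>\<gamma>\<close> where the height path after \<open>\<alpha> \<omega>\<close> first comes down to \<open>height \<omega>\<close>\<close>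
  define f where "f k = height (\<alpha> @ \<omega> @ take k \<gamma>)" for k
  have "p = (\<alpha> @ [hd \<omega>]) @ tl \<omega> @ \<gamma> @ \<delta>"
    using p assms(2) by simp
  then have "0 \<le> height (\<alpha> @ [hd \<omega>])"
    using dp(3) nonneg_heights_prefix by metis
  then have "height \<omega> \<le> f 0"
    using height_append_hd[OF assms(2), of \<alpha>] by (simp add: f_def)
  then have "\<exists>k\<le>length \<gamma>. f k = height \<omega> \<and> (\<forall>k'\<le>k. height \<omega> \<le> f k')"
    using height_append_take_Suc_ge[of _ \<gamma> "\<alpha> @ \<omega>"] returned
    by (intro int_path_reaches_level) (simp_all add: f_def)
  then obtain k where k: "k \<le> length \<gamma>" "f k = height \<omega>" "\<forall>k'\<le>k. height \<omega> \<le> f k'"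
    by blast
  have "set (take k \<gamma>) \<subseteq> set \<gamma>" "last \<omega> \<in> set \<omega>"
    using assms(2) by (simp_all add: set_take_subset)
  then have "distinct (last \<omega> # take k \<gamma>)" "\<forall>y\<in>set (last \<omega> # take k \<gamma>). 0 < y"
    using dp(1,2) distinct_take[of \<gamma> k] unfolding p by auto
  moreover have "\<forall>m\<le>length (take k \<gamma>). f k \<le> f m"
    using k(2,3) by simp
  ultimately have "ballot (rev (take k \<gamma>) @ [last \<omega>])"
    using ballot_rev_snoc_iff[of "\<alpha> @ \<omega>" "last \<omega>" "take k \<gamma>"] assms(2)
    by (simp add: f_def min_absorb1)
  then have "decomp_cand \<omega> p (\<alpha>, take k \<gamma>, drop k \<gamma> @ \<delta>)"
    using p k(2) by (simp add: decomp_cand_def f_def)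
  then show ?thesis by blast
qed

lemma is_decomp_unique:
  assumes "distinct p" "\<omega> \<noteq> []" "is_decomp \<omega> p (a, g, d)" "is_decomp \<omega> p (a', g', d')"
  shows "(a', g', d') = (a, g, d)"
proof -
  have "decomp_cand \<omega> p (a, g, d)" "decomp_cand \<omega> p (a', g', d')"
    using assms(3,4) unfolding is_decomp_def by blast+
  then have p: "p = a @ \<omega> @ g @ d" and "a @ \<omega> @ g @ d = a' @ \<omega> @ g' @ d'"
    unfolding decomp_cand_def by simp_all
  then have "a' = a" "g' @ d' = g @ d"
    using append_middle_unique[of a \<omega> "g @ d" a' "g' @ d'"] assms(1,2) by simp_all
  moreover have "length g' = length g"
    using assms(3,4) unfolding is_decomp_def by (metis fst_conv snd_conv le_antisym)
  ultimately show ?thesis by simp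
qed

lemma decomp_eqI:
  assumes "distinct p" "\<omega> \<noteq> []" "is_decomp \<omega> p t"
  shows "decomp \<omega> p = t"
  unfolding decomp_def
proof (rule the_equality)
  show "t' = t" if "is_decomp \<omega> p t'" for t'
    using is_decomp_unique[OF assms(1,2)] assms(3) that by (cases t, cases t') blast
qed (fact assms(3))

lemma is_decomp_decomp:
  assumes "p \<in> X n \<omega>" "\<omega> \<noteq> []"
  shows "is_decomp \<omega> p (decomp \<omega> p)"
proof -
  obtain \<alpha> \<gamma> \<delta> where bp: "ballot_perm n p" and "p = \<alpha> @ \<omega> @ \<gamma> @ \<delta>"
    and "height (\<alpha> @ \<omega> @ \<gamma>) = height \<omega>"
    using assms(1) unfolding X_def by blast
  then obtain g d where cand: "decomp_cand \<omega> p (\<alpha>, g, d)"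
    using decomp_cand_exists assms(2) unfolding ballot_perm_def by blast
  have "\<forall>t. decomp_cand \<omega> p t \<longrightarrow> length (fst (snd t)) < Suc (length p)"
    by (auto simp: decomp_cand_def)
  then obtain t where "is_decomp \<omega> p t"
    using ex_has_greatest_nat[where P = "decomp_cand \<omega> p" and f = "\<lambda>t. length (fst (snd t))", OF cand]
    unfolding is_decomp_def by blast
  moreover have "distinct p" using bp by (simp add: ballot_perm_def)
  ultimately show ?thesis using decomp_eqI[OF _ assms(2)] by metis
qed

text \<open>
  The words \<open>[i, n, j - 1, j]\<close> and \<open>[j - 1, j, n, i]\<close> satisfy these assumptions in either order,
  since no letter lies strictly between \<open>j - 1\<close> and \<open>j\<close>.
\<close>

locale swappable =
  fixes w1 w2 :: "nat list"
  assumes w1_nonempty: "w1 \<noteq> []"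
    and set_w2: "set w2 = set w1"
    and ballot_w2: "ballot w2"
    and height_w1: "height w1 = 1"
    and height_w2: "height w2 = 1"
    and rise_hd_w2: "\<And>y. y \<notin> set w1 \<Longrightarrow> rise y (hd w2) = rise y (last w1)"
    and rise_last_w2: "\<And>y. y \<notin> set w1 \<Longrightarrow> rise y (last w2) = rise y (hd w1)"
begin

lemma w2_nonempty: "w2 \<noteq> []"
  using w1_nonempty set_w2 by auto

lemma height_rev_snoc_hd_w2:
  assumes "set \<gamma> \<inter> set w1 = {}"
  shows "height (rev \<gamma> @ [hd w2]) = height (rev \<gamma> @ [last w1])"
proof (cases "\<gamma> = []")
  case False
  then have "hd \<gamma> \<notin> set w1" using assms by (auto dest: hd_in_set)
  with False show ?thesis
    using rise_hd_w2 by (simp add: height_append last_rev)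
qed simp

lemma height_snoc_last_w2:
  assumes "set \<alpha> \<inter> set w1 = {}"
  shows "height (\<alpha> @ [last w2]) = height (\<alpha> @ [hd w1])"
proof (cases "\<alpha> = []")
  case False
  then have "last \<alpha> \<notin> set w1" using assms by (auto dest: last_in_set)
  with False show ?thesis
    using rise_last_w2 by (simp add: height_append)
qed simp

lemma height_swap:
  assumes "set \<alpha> \<inter> set w1 = {}" "set \<gamma> \<inter> set w1 = {}"
  shows "height (rev \<gamma> @ w2 @ rev \<alpha>) = 2 - height (\<alpha> @ w1 @ \<gamma>)"
proof -
  have "height (rev \<gamma> @ [last w1]) = - height (last w1 # \<gamma>)"
    using height_rev[of "last w1 # \<gamma>"] by simp
  moreover have "height (last w2 # rev \<alpha>) = - height (\<alpha> @ [last w2])"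
    using height_rev[of "\<alpha> @ [last w2]"] by simp
  ultimately show ?thesis
    using height_append_middle[OF w1_nonempty, of \<alpha> \<gamma>] height_append_middle[OF w2_nonempty]
      height_rev_snoc_hd_w2[OF assms(2)] height_snoc_last_w2[OF assms(1)] height_w1 height_w2
    by simp
qed

lemma ballot_snoc_last_w2:
  assumes "ballot (\<alpha> @ w1 @ r)"
  shows "ballot (\<alpha> @ [last w2])"
proof -
  have "last w2 \<in> set w1" using w2_nonempty set_w2 last_in_set by blast
  moreover have "(\<alpha> @ [hd w1]) @ tl w1 @ r = \<alpha> @ w1 @ r"
    using w1_nonempty by simp
  then have "nonneg_heights ((\<alpha> @ [hd w1]) @ tl w1 @ r)"
    using assms by (simp only: ballot_iff_nonneg_heights)
  then have "nonneg_heights (\<alpha> @ [hd w1])"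
    unfolding nonneg_heights_append_iff[of "\<alpha> @ [hd w1]"] by blast
  moreover have "set \<alpha> \<inter> set w1 = {}" using assms by (auto simp: ballot_def)
  ultimately show ?thesis
    using assms height_snoc_last_w2
    by (auto simp: ballot_iff_nonneg_heights nonneg_heights_snoc_iff)
qed

lemma nonneg_heights_swap_prefix:
  assumes "ballot (rev \<gamma> @ [last w1])" "set \<gamma> \<inter> set w1 = {}" "ballot (\<alpha> @ [last w2])"
    and "height (rev \<gamma> @ w2 @ rev \<alpha>) = 1"
  shows "nonneg_heights (rev \<gamma> @ w2 @ rev \<alpha>)"
proof -
  have \<gamma>: "nonneg_heights (rev \<gamma>)" "0 \<le> height (rev \<gamma> @ [last w1])"
    using assms(1) by (simp_all add: ballot_iff_nonneg_heights nonneg_heights_snoc_iff)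
  have "0 \<le> height (rev \<gamma> @ take k w2)" if "k \<le> length w2" for k
  proof (cases k)
    case 0
    then show ?thesis using \<gamma>(1) nonneg_heights_prefix[of "rev \<gamma>" "[]"] by simp
  next
    case (Suc k')
    have "0 \<le> height (take k w2)"
      using ballot_w2 that unfolding ballot_iff_nonneg_heights nonneg_heights_def by blast
    moreover have "height (rev \<gamma> @ take k w2) = height (rev \<gamma> @ [hd w2]) + height (take k w2)"
      using height_append_hd[of "take k w2" "rev \<gamma>"] Suc w2_nonempty by simp
    ultimately show ?thesis
      using \<gamma>(2) height_rev_snoc_hd_w2[OF assms(2)] by simp
  qed
  with \<gamma>(1) have "nonneg_heights (rev \<gamma> @ w2)"
    unfolding nonneg_heights_append_iff by blast
  moreover have "1 \<le> height (rev \<gamma> @ w2 @ take k (rev \<alpha>))" if "k \<le> length \<alpha>" for k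
    using ballot_rev_snoc_iff[of "rev \<gamma> @ w2" "last w2" "rev \<alpha>"] assms(3,4) w2_nonempty that
    by simp
  ultimately have "nonneg_heights ((rev \<gamma> @ w2) @ rev \<alpha>)"
    unfolding nonneg_heights_append_iff[of "rev \<gamma> @ w2"] by fastforce
  then show ?thesis by simp
qed

lemma ballot_swap_and_not_returns:
  assumes bp: "ballot (\<alpha> @ w1 @ \<gamma> @ \<delta>)"
    and cand: "decomp_cand w1 (\<alpha> @ w1 @ \<gamma> @ \<delta>) (\<alpha>, \<gamma>, \<delta>)"
    and no_return: "\<not> returns (\<alpha> @ w1 @ \<gamma>) \<delta>"
  shows "ballot (rev \<gamma> @ w2 @ rev \<alpha> @ \<delta>) \<and> \<not> returns (rev \<gamma> @ w2 @ rev \<alpha>) \<delta>"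
proof -
  define P where "P = \<alpha> @ w1 @ \<gamma>"
  define Q where "Q = rev \<gamma> @ w2 @ rev \<alpha>"
  from cand have hP: "height P = 1" and bg: "ballot (rev \<gamma> @ [last w1])"
    by (simp_all add: decomp_cand_def height_w1 P_def)
  have dp: "distinct (P @ \<delta>)" "\<forall>x\<in>set (P @ \<delta>). 0 < x" "nonneg_heights (P @ \<delta>)"
    using bp by (simp_all add: ballot_iff_nonneg_heights P_def)
  then have disj: "set \<alpha> \<inter> set w1 = {}" "set \<gamma> \<inter> set w1 = {}" "set P \<inter> set \<delta> = {}"
    by (auto simp: P_def)
  have "distinct w2" using ballot_w2 by (simp add: ballot_def)
  with dp(1,2) have Q_distinct: "distinct (Q @ \<delta>)" "\<forall>x\<in>set (Q @ \<delta>). 0 < x"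
    using set_w2 by (auto simp: P_def Q_def)
  have "P \<noteq> []" "Q \<noteq> []" "set Q \<inter> set \<delta> = {}"
    using w1_nonempty w2_nonempty Q_distinct(1) by (auto simp: P_def Q_def)
  with disj(3) have PQ: "P \<noteq> []" "Q \<noteq> []" "last P \<notin> set \<delta>" "last Q \<notin> set \<delta>"
    using last_in_set by blast+
  have hQ: "height Q = 1"
    using height_swap[OF disj(1,2)] hP by (simp add: P_def Q_def)
  have "\<forall>m\<le>length \<delta>. 0 \<le> height (P @ take m \<delta>)"
    using dp(3) unfolding nonneg_heights_append_iff by blast
  then have "0 \<le> height (take m \<delta>)" if "1 \<le> m" "m \<le> length \<delta>" for m
    using height_take_nonneg_if_not_returns[OF PQ(1) _ PQ(3)] hP no_return that
    by (simp add: P_def)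
  then have tail: "(\<forall>m\<le>length \<delta>. 0 \<le> height (Q @ take m \<delta>)) \<and> \<not> returns Q \<delta>"
    using nonneg_and_not_returns_if_tail_nonneg[OF PQ(2) _ PQ(4)] hQ by simp
  moreover have "ballot (\<alpha> @ [last w2])"
    using ballot_snoc_last_w2 bp by blast
  then have "nonneg_heights (Q @ \<delta>)"
    using nonneg_heights_swap_prefix[OF bg disj(2)] hQ tail
    unfolding nonneg_heights_append_iff Q_def by blast
  ultimately show ?thesis
    using Q_distinct by (simp add: ballot_iff_nonneg_heights Q_def)
qed

lemma swap_is_decomp:
  assumes bp: "ballot_perm n p" and dec: "is_decomp w1 p (\<alpha>, \<gamma>, \<delta>)"
  defines "q \<equiv> rev \<gamma> @ w2 @ rev \<alpha> @ \<delta>"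
  shows "q \<in> X n w2 \<and> is_decomp w2 q (rev \<gamma>, rev \<alpha>, \<delta>)"
proof -
  have cand: "decomp_cand w1 p (\<alpha>, \<gamma>, \<delta>)" using dec by (simp add: is_decomp_def)
  then have p: "p = \<alpha> @ w1 @ \<gamma> @ \<delta>" and hP: "height (\<alpha> @ w1 @ \<gamma>) = 1"
    by (simp_all add: decomp_cand_def height_w1)
  have "ballot p" using bp by (simp add: ballot_perm_def)
  then have "\<not> returns (\<alpha> @ w1 @ \<gamma>) \<delta>"
    using dec is_decomp_iff_not_returns[OF _ _ w1_nonempty cand] by (simp add: ballot_def)
  with \<open>ballot p\<close> cand have q: "ballot q" "\<not> returns (rev \<gamma> @ w2 @ rev \<alpha>) \<delta>"
    using ballot_swap_and_not_returns unfolding p q_def by blast+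
  have disj: "set \<alpha> \<inter> set w1 = {}" "set \<gamma> \<inter> set w1 = {}"
    using \<open>ballot p\<close> unfolding p by (auto simp: ballot_def)
  have h: "height (rev \<gamma> @ w2 @ rev \<alpha>) = height w2"
    using height_swap[OF disj] hP height_w2 by simp
  have "set q = set p" using set_w2 unfolding p q_def by auto
  then have "ballot_perm n q"
    using bp q(1) distinct_card[of p] distinct_card[of q] by (simp add: ballot_perm_def ballot_def)
  then have "q \<in> X n w2"
    using h unfolding X_def q_def by blast
  moreover have cand_q: "decomp_cand w2 q (rev \<gamma>, rev \<alpha>, \<delta>)"
    using h ballot_snoc_last_w2 \<open>ballot p\<close> unfolding p q_def decomp_cand_def by simp
  ultimately show ?thesis
    using is_decomp_iff_not_returns[OF _ _ w2_nonempty cand_q] q by (simp add: ballot_def)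
qed

lemma decomp_swap:
  assumes "p \<in> X n w1" "decomp w1 p = (\<alpha>, \<gamma>, \<delta>)"
  shows "rev \<gamma> @ w2 @ rev \<alpha> @ \<delta> \<in> X n w2 \<and>
    decomp w2 (rev \<gamma> @ w2 @ rev \<alpha> @ \<delta>) = (rev \<gamma>, rev \<alpha>, \<delta>)"
proof -
  have "is_decomp w1 p (\<alpha>, \<gamma>, \<delta>)"
    using is_decomp_decomp[OF assms(1) w1_nonempty] assms(2) by simp
  moreover have "ballot_perm n p" using assms(1) by (simp add: X_def)
  ultimately have X: "rev \<gamma> @ w2 @ rev \<alpha> @ \<delta> \<in> X n w2"
    and dec: "is_decomp w2 (rev \<gamma> @ w2 @ rev \<alpha> @ \<delta>) (rev \<gamma>, rev \<alpha>, \<delta>)"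
    using swap_is_decomp by blast+
  have "distinct (rev \<gamma> @ w2 @ rev \<alpha> @ \<delta>)"
    using X by (simp add: X_def ballot_perm_def)
  with X show ?thesis
    using decomp_eqI[OF _ w2_nonempty dec] by blast
qed

lemma swap_map_in_X_and_inverse:
  assumes "p \<in> X n w1"
  shows "swap_map w1 w2 p \<in> X n w2 \<and> swap_map w2 w1 (swap_map w1 w2 p) = p"
proof -
  obtain \<alpha> \<gamma> \<delta> where dec: "decomp w1 p = (\<alpha>, \<gamma>, \<delta>)" by (cases "decomp w1 p")
  have p: "p = \<alpha> @ w1 @ \<gamma> @ \<delta>"
    using is_decomp_decomp[OF assms w1_nonempty] dec by (simp add: is_decomp_def decomp_cand_def)
  have q: "swap_map w1 w2 p = rev \<gamma> @ w2 @ rev \<alpha> @ \<delta>"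
    by (simp add: swap_map_def dec)
  have "swap_map w2 w1 (rev \<gamma> @ w2 @ rev \<alpha> @ \<delta>) = \<alpha> @ w1 @ \<gamma> @ \<delta>"
    using decomp_swap[OF assms dec] unfolding swap_map_def by simp
  then show ?thesis
    using decomp_swap[OF assms dec] p unfolding q by simp
qed

end

theorem theorem2p3:
  fixes n i j :: nat
  assumes "0 < n" "0 < i" "0 < j" "i + 2 \<le> j" "j \<le> n - 1"
  defines "lam \<equiv> [i, n, j - 1, j]" and "mu \<equiv> [j - 1, j, n, i]"
  shows "(\<forall>p \<alpha> \<gamma> \<delta>. p \<in> X n lam \<longrightarrow> decomp lam p = (\<alpha>, \<gamma>, \<delta>) \<longrightarrow>
            rev \<gamma> @ mu @ rev \<alpha> @ \<delta> \<in> X n mu \<and>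
            decomp mu (rev \<gamma> @ mu @ rev \<alpha> @ \<delta>) = (rev \<gamma>, rev \<alpha>, \<delta>))
       \<and> bij_betw (swap_map lam mu) (X n lam) (X n mu)
       \<and> (\<forall>s \<in> X n mu. swap_map mu lam s \<in> X n lam \<and> swap_map lam mu (swap_map mu lam s) = s)
       \<and> (\<forall>p \<in> X n lam. swap_map mu lam (swap_map lam mu p) = p)"
proof -
  have ij: "0 < i" "i < j - 1" "j - 1 < j" "j < n"
    using assms(2-5) by auto
  have rises: "rise i n = 1" "rise n (j - 1) = -1" "rise (j - 1) j = 1" "rise j n = 1" "rise n i = -1"
    using ij by (auto simp: rise_def)
  have ballot_words: "ballot lam" "ballot mu"
    using ij rises
    by (auto simp: lam_def mu_def ballot_def le_Suc_eq numeral_eq_Suc)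
  have rise_j: "rise y (j - 1) = rise y j" if "y \<noteq> j - 1" "y \<noteq> j" for y
    using that ij by (auto simp: rise_def)
  interpret lam_mu: swappable lam mu
    by unfold_locales (use ij rises ballot_words rise_j in \<open>auto simp: lam_def mu_def\<close>)
  interpret mu_lam: swappable mu lam
    by unfold_locales (use ij rises ballot_words rise_j in \<open>auto simp: lam_def mu_def\<close>)
  show ?thesis
  proof (intro conjI)
    show "bij_betw (swap_map lam mu) (X n lam) (X n mu)"
      using lam_mu.swap_map_in_X_and_inverse mu_lam.swap_map_in_X_and_inverse
      by (intro bij_betw_byWitness[where f' = "swap_map mu lam"]) auto
  qed (use lam_mu.decomp_swap lam_mu.swap_map_in_X_and_inverse mu_lam.swap_map_in_X_and_inverse in auto)
qed

end
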